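(* Consider two bits $B_1,B_2$ and two anti-bits $A_1,A_2$ in the state $\Phi_{B_1A_1}\otimes\Phi_{B_2A_2}$, where $\Phi=|\Phi\rangle\langle\Phi|$ and $|\Phi\rangle=(|0\rangle|0\rangle+|1\rangle|1\rangle)/\sqrt2$. For $i,j\in\{0,1\}$ and a bit $B$ and anti-bit $A$ let $|\phi_i^{(j)}\rangle_{BA}=|i\rangle_B|i\oplus j\rangle_A$ ($\oplus$ = addition mod 2). Let $\{|v_0\rangle,|v_1\rangle\}$ and $\{|w_0\rangle,|w_1\rangle\}$ be any two orthonormal bases of $\mathbb C^2$, with $|v_a\rangle=v_{a,0}|0\rangle+v_{a,1}|1\rangle$ and $|w_b\rangle=w_{b,0}|0\rangle+w_{b,1}|1\rangle$. Define, for $a,b,l\in\{0,1\}$, $|V_a^{(l)}\rangle=v_{a,0}|\phi_0^{(l)}\rangle_{B_1A_2}+v_{a,1}|\phi_1^{(l)}\rangle_{B_1A_2}$, $|W_b^{(l)}\rangle=w_{b,0}|\phi_l^{(l)}\rangle_{B_2A_1}+w_{b,1}|\phi_{l\oplus1}^{(l)}\rangle_{B_2A_1}$, $P_a=\sum_{l}|V_a^{(l)}\rangle\langle V_a^{(l)}|$ and $Q_b=\sum_l|W_b^{(l)}\rangle\langle W_b^{(l)}|$. Then $\{P_0,P_1\}$ is a valid measurement on the $(1,1)$-composite $B_1A_2$, $\{Q_0,Q_1\}$ is a valid measurement on the $(1,1)$-composite $B_2A_1$, and for all $a,b\in\{0,1\}$ $$\mathrm{Tr}\big[(P_a\otimes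 Q_b)(\Phi_{B_1A_1}\otimes\Phi_{B_2A_2})\big]=\tfrac12\,\big|v_{a,0}w_{b,0}+v_{a,1}w_{b,1}\big|^2,$$ which equals the probability of outcomes $(a,b)$ when the qubit measurements in bases $\{|v_a\rangle\}$ and $\{|w_b\rangle\}$ are performed on the two-qubit maximally entangled state $(|00\rangle+|11\rangle)/\sqrt2$. Consequently, with Alice holding $B_1A_2$ and Bob holding $B_2A_1$, local valid measurements on this state achieve the CHSH value $2\sqrt2$, violating the CHSH inequality.
   Context: Take $d=2$: bits and anti-bits each have Hilbert space $\mathbb C^2$ with computational basis $\{|0\rangle,|1\rangle\}$. For a bit $B$ and anti-bit $A$, the pure states of the $(1,1)$-composite $BA$ are unit vectors lying in the parity-0 subspace $\mathrm{span}\{|0\rangle|0\rangle,|1\rangle|1\rangle\}$ or in the parity-1 subspace $\mathrm{span}\{|0\rangle|1\rangle,|1\rangle|0\rangle\}$. For two bits and two anti-bits, pure states are unit vectors of the form $(U\otimes W)|\Psi'\rangle$ with $U$ a permutation of the bit factors, $W$ a permutation of the anti-bit factors and $|\Psi'\rangle$ having well-defined parity on each pair $(B_1A_1)$ and $(B_2A_2)$; states are convex combinations of projectors onto pure states. A valid measurement on a composite is a POVM whose elements are nonnegative linear combinations of projectors onto pure states of that composite; outcome probabilities are given by $\mathrm{Tr}[P\rho]$. The CHSH value is $\langle A_0B_0\rangle+\langle A_0B_1\rangle+\langle A_1B_0\rangle-\langle A_1B_1\rangle$ for two-outcome ($\pm1$) measurements $A_0,A_1$ of Alice and $B_0,B_1$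 of Bob; the CHSH inequality states that local hidden variable models give at most $2$. *)

theory Defs
  imports Complex_Main
begin

text \<open>Computational basis of C^2 indexed by bool: False = |0>, True = |1>.
  A vector of a (1,1)-composite (bit B, anti-bit A) is psi :: bool => bool => complex,
  psi b a = coefficient of |b>_B |a>_A.\<close>

type_synonym vec11 = "bool \<Rightarrow> bool \<Rightarrow> complex"
type_synonym op11 = "bool \<times> bool \<Rightarrow> bool \<times> bool \<Rightarrow> complex"

definition xor2 :: "bool \<Rightarrow> bool \<Rightarrow> bool" where
  "xor2 i j = (i \<noteq> j)"

definition pure11 :: "vec11 \<Rightarrow> bool" where
  "pure11 psi \<longleftrightarrow>
     (\<Sum>b\<in>UNIV. \<Sum>a\<in>UNIV. (cmod (psi b a))\<^sup>2) = 1 \<and>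
     ((\<forall>b a. b \<noteq> a \<longrightarrow> psi b a = 0) \<or> (\<forall>b a. b = a \<longrightarrow> psi b a = 0))"

definition proj11 :: "vec11 \<Rightarrow> op11" where
  "proj11 psi = (\<lambda>(b, a) (b', a'). psi b a * cnj (psi b' a'))"

definition id11 :: op11 where
  "id11 = (\<lambda>x y. if x = y then 1 else 0)"

definition admissible_effect11 :: "op11 \<Rightarrow> bool" where
  "admissible_effect11 P \<longleftrightarrow>
     (\<exists>(n::nat) (c::nat \<Rightarrow> real) (psi::nat \<Rightarrow> vec11).
        (\<forall>k<n. c k \<ge> 0 \<and> pure11 (psi k)) \<and>
        P = (\<lambda>x y. \<Sum>k<n. complex_of_real (c k) * proj11 (psi k) x y))"

definition valid_meas11 :: "(bool \<Rightarrow> op11) \<Rightarrow> bool" where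
  "valid_meas11 P \<longleftrightarrow>
     (\<forall>a. admissible_effect11 (P a)) \<and> (\<forall>x y. (\<Sum>a\<in>UNIV. P a x y) = id11 x y)"

definition onb2 :: "(bool \<Rightarrow> bool \<Rightarrow> complex) \<Rightarrow> bool" where
  "onb2 v \<longleftrightarrow> (\<forall>a a'. (\<Sum>i\<in>UNIV. v a i * cnj (v a' i)) = (if a = a' then 1 else 0))"

definition phi :: "bool \<Rightarrow> bool \<Rightarrow> vec11" where
  "phi i j = (\<lambda>b a. if b = i \<and> a = xor2 i j then 1 else 0)"

definition Vvec :: "(bool \<Rightarrow> bool \<Rightarrow> complex) \<Rightarrow> bool \<Rightarrow> bool \<Rightarrow> vec11" where
  "Vvec v a l = (\<lambda>b x. v a False * phi False l b x + v a True * phi True l b x)"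

definition Wvec :: "(bool \<Rightarrow> bool \<Rightarrow> complex) \<Rightarrow> bool \<Rightarrow> bool \<Rightarrow> vec11" where
  "Wvec w b l = (\<lambda>y x. w b False * phi l l y x + w b True * phi (xor2 l True) l y x)"

definition Pmeas :: "(bool \<Rightarrow> bool \<Rightarrow> complex) \<Rightarrow> bool \<Rightarrow> op11" where
  "Pmeas v a = (\<lambda>x y. \<Sum>l\<in>UNIV. proj11 (Vvec v a l) x y)"

definition Qmeas :: "(bool \<Rightarrow> bool \<Rightarrow> complex) \<Rightarrow> bool \<Rightarrow> op11" where
  "Qmeas w b = (\<lambda>x y. \<Sum>l\<in>UNIV. proj11 (Wvec w b l) x y)"

text \<open>Two bits and two anti-bits: basis index (b1, a1, b2, a2).\<close>
type_synonym idx4 = "bool \<times> bool \<times> bool \<times> bool"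
type_synonym op4 = "idx4 \<Rightarrow> idx4 \<Rightarrow> complex"

definition PhiVec :: vec11 where
  "PhiVec = (\<lambda>b a. if b = a then complex_of_real (1 / sqrt 2) else 0)"

definition rho4 :: op4 where
  "rho4 = (\<lambda>(b1, a1, b2, a2) (b1', a1', b2', a2').
     PhiVec b1 a1 * cnj (PhiVec b1' a1') * PhiVec b2 a2 * cnj (PhiVec b2' a2'))"

definition tensorPQ :: "op11 \<Rightarrow> op11 \<Rightarrow> op4" where
  "tensorPQ P Q = (\<lambda>(b1, a1, b2, a2) (b1', a1', b2', a2').
     P (b1, a2) (b1', a2') * Q (b2, a1) (b2', a1'))"

definition trace4 :: "op4 \<Rightarrow> complex" where
  "trace4 M = (\<Sum>x\<in>UNIV. M x x)"

definition mult4 :: "op4 \<Rightarrow> op4 \<Rightarrow> op4" where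
  "mult4 M N = (\<lambda>x z. \<Sum>y\<in>UNIV. M x y * N y z)"

definition prob4 :: "op11 \<Rightarrow> op11 \<Rightarrow> complex" where
  "prob4 P Q = trace4 (mult4 (tensorPQ P Q) rho4)"

definition pm1 :: "bool \<Rightarrow> real" where
  "pm1 a = (if a then -1 else 1)"

definition corr :: "(bool \<Rightarrow> bool \<Rightarrow> op11) \<Rightarrow> (bool \<Rightarrow> bool \<Rightarrow> op11) \<Rightarrow> bool \<Rightarrow> bool \<Rightarrow> real" where
  "corr PA QB x y = (\<Sum>a\<in>UNIV. \<Sum>b\<in>UNIV. pm1 a * pm1 b * Re (prob4 (PA x a) (QB y b)))"

definition chsh :: "(bool \<Rightarrow> bool \<Rightarrow> op11) \<Rightarrow> (bool \<Rightarrow> bool \<Rightarrow> op11) \<Rightarrow> real" where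
  "chsh PA QB = corr PA QB False False + corr PA QB False True
              + corr PA QB True False - corr PA QB True True"

end

theory Submission
  imports Defs
begin

text \<open>In the state \<open>\<Phi>\<^sub>B\<^sub>1\<^sub>A\<^sub>1 \<otimes> \<Phi>\<^sub>B\<^sub>2\<^sub>A\<^sub>2\<close> each anti-bit is perfectly
  correlated with its bit, so a measurement on \<open>B\<^sub>1A\<^sub>2\<close> and one on \<open>B\<^sub>2A\<^sub>1\<close> only see the
  diagonal entries \<open>(b\<^sub>1, b\<^sub>2)\<close> of \<open>P\<close> and \<open>(b\<^sub>2, b\<^sub>1)\<close> of \<open>Q\<close>. The effects \<open>P\<^sub>a\<close> and \<open>Q\<^sub>b\<close> are
  block diagonal in the parity of the composite, and within each parity block they act like
  the qubit projectors onto \<open>v\<^sub>a\<close> and \<open>w\<^sub>b\<close> on the bit. Summing over the two parity blocks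
  gives \<open>|v\<^sub>a \<cdot> w\<^sub>b|\<^sup>2 / 2\<close>, the statistics of the qubit Bell state; the usual Tsirelson
  angles then give the CHSH value \<open>2\<surd>2\<close>. Validity of \<open>{P\<^sub>0, P\<^sub>1}\<close> needs the columns of an
  orthonormal basis to be orthonormal, i.e. that a one-sided inverse of a \<open>2\<times>2\<close> matrix is
  two-sided.\<close>

lemma sum_UNIV_bool: "(\<Sum>x\<in>UNIV. f x) = f False + f True"
  by (simp add: UNIV_bool)

lemma sum_UNIV_prod:
  "(\<Sum>x\<in>(UNIV :: ('a::finite \<times> 'b::finite) set). f x) = (\<Sum>a\<in>UNIV. \<Sum>b\<in>UNIV. f (a, b))"
  using sum.cartesian_product[of "\<lambda>a b. f (a, b)" UNIV UNIV] by simp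

lemma right_inverse_imp_left_inverse_2x2:
  fixes a b c d e f g h :: "'a::field"
  assumes "a * e + b * f = 1" "a * g + b * h = 0" "c * e + d * f = 0" "c * g + d * h = 1"
  shows "e * a + g * c = 1" "e * b + g * d = 0" "f * a + h * c = 0" "f * b + h * d = 1"
  using assms by algebra+

lemma onb2_columns:
  assumes "onb2 v"
  shows "(\<Sum>a\<in>UNIV. v a i * cnj (v a j)) = (if i = j then 1 else 0)"
proof -
  have rows: "v a False * cnj (v a' False) + v a True * cnj (v a' True) = (if a = a' then 1 else 0)"
    for a a'
    using assms by (simp add: onb2_def sum_UNIV_bool)
  note cols = right_inverse_imp_left_inverse_2x2[OF rows[of False False, simplified]
      rows[of False True, simplified] rows[of True False, simplified] rows[of True True, simplified]]
  show ?thesis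
    using cols
    by (cases i; cases j) (simp_all add: sum_UNIV_bool mult.commute)
qed

lemma onb2_row_norm:
  assumes "onb2 v"
  shows "(cmod (v a False))\<^sup>2 + (cmod (v a True))\<^sup>2 = 1"
proof -
  have "v a False * cnj (v a False) + v a True * cnj (v a True) = 1"
    using assms by (simp add: onb2_def sum_UNIV_bool)
  then have "complex_of_real ((cmod (v a False))\<^sup>2 + (cmod (v a True))\<^sup>2) = 1"
    by (simp only: of_real_add complex_norm_square)
  then show ?thesis
    using of_real_eq_1_iff by blast
qed

lemma onb2_of_real:
  assumes "\<And>a a'. (\<Sum>i\<in>UNIV. V a i * V a' i) = (if a = a' then 1 else 0)"
  shows "onb2 (\<lambda>a i. complex_of_real (V a i))"
  using assms by (simp add: onb2_def flip: of_real_mult of_real_sum)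

lemma Vvec_apply: "Vvec v a l b x = (if x = xor2 b l then v a b else 0)"
  by (cases b; cases l; cases x) (simp_all add: Vvec_def phi_def xor2_def)

lemma Wvec_apply: "Wvec w c l y x = (if x = xor2 y l then w c x else 0)"
  by (cases y; cases l; cases x) (simp_all add: Wvec_def phi_def xor2_def)

lemma Pmeas_apply:
  "Pmeas v a (b1, a2) (b1', a2') = (if (b1 = a2) = (b1' = a2') then v a b1 * cnj (v a b1') else 0)"
  unfolding Pmeas_def proj11_def
  by (cases b1; cases a2; cases b1'; cases a2') (simp_all add: sum_UNIV_bool Vvec_apply xor2_def)

lemma Qmeas_apply:
  "Qmeas w b (b2, a1) (b2', a1') = (if (b2 = a1) = (b2' = a1') then w b a1 * cnj (w b a1') else 0)"
  unfolding Qmeas_def proj11_def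
  by (cases a1; cases b2; cases a1'; cases b2') (simp_all add: sum_UNIV_bool Wvec_apply xor2_def)

lemma rho4_apply:
  "rho4 (b1, a1, b2, a2) (b1', a1', b2', a2') =
     (if b1 = a1 \<and> b1' = a1' \<and> b2 = a2 \<and> b2' = a2' then 1/4 else 0)"
proof -
  have "complex_of_real (1 / sqrt 2) * complex_of_real (1 / sqrt 2) = 1/2"
    by (simp flip: of_real_mult)
  then show ?thesis
    by (simp add: rho4_def PhiVec_def mult.assoc)
qed

text \<open>The anti-bits \<open>A\<^sub>1, A\<^sub>2\<close> are identified with the bits \<open>B\<^sub>1, B\<^sub>2\<close>, which swaps the
  arguments of \<open>Q\<close>.\<close>

lemma prob4_eq_sum:
  "prob4 P Q = (1/4) * (\<Sum>b1\<in>UNIV. \<Sum>b2\<in>UNIV. \<Sum>b1'\<in>UNIV. \<Sum>b2'\<in>UNIV.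
      P (b1, b2) (b1', b2') * Q (b2, b1) (b2', b1'))"
  unfolding prob4_def trace4_def mult4_def tensorPQ_def
  by (simp only: sum_UNIV_prod sum_UNIV_bool rho4_apply) (simp add: algebra_simps)

lemma prob4_Pmeas_Qmeas:
  "prob4 (Pmeas v a) (Qmeas w b) =
     complex_of_real ((1/2) * (cmod (v a False * w b False + v a True * w b True))\<^sup>2)"
proof -
  let ?z = "v a False * w b False + v a True * w b True"
  have "prob4 (Pmeas v a) (Qmeas w b) = (1/2) * (?z * cnj ?z)"
    unfolding prob4_eq_sum Pmeas_apply Qmeas_apply by (simp add: sum_UNIV_bool algebra_simps)
  also have "\<dots> = complex_of_real ((1/2) * (cmod ?z)\<^sup>2)"
    by (simp only: of_real_mult complex_norm_square) simp
  finally show ?thesis .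
qed

lemma pure11_Vvec:
  assumes "onb2 v"
  shows "pure11 (Vvec v a l)"
  using onb2_row_norm[OF assms, of a]
  by (cases l) (simp_all add: pure11_def sum_UNIV_bool Vvec_apply xor2_def)

lemma pure11_Wvec:
  assumes "onb2 w"
  shows "pure11 (Wvec w b l)"
  using onb2_row_norm[OF assms, of b]
  by (cases l) (simp_all add: pure11_def sum_UNIV_bool Wvec_apply xor2_def add.commute)

lemma admissible_effect11_sum_proj:
  fixes psi :: "bool \<Rightarrow> vec11"
  assumes "\<And>l. pure11 (psi l)"
  shows "admissible_effect11 (\<lambda>x y. \<Sum>l\<in>UNIV. proj11 (psi l) x y)"
  unfolding admissible_effect11_def
proof (intro exI conjI)
  show "\<forall>k<2. (0::real) \<le> 1 \<and> pure11 (psi (k = 1))"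
    using assms by simp
  show "(\<lambda>x y. \<Sum>l\<in>UNIV. proj11 (psi l) x y) =
      (\<lambda>x y. \<Sum>k<2. complex_of_real 1 * proj11 (psi (k = (1::nat))) x y)"
    by (simp add: sum_UNIV_bool numeral_2_eq_2 add.commute)
qed

lemma valid_meas11_Pmeas:
  assumes "onb2 v"
  shows "valid_meas11 (Pmeas v)"
  unfolding valid_meas11_def
proof (intro conjI allI)
  show "admissible_effect11 (Pmeas v a)" for a
    unfolding Pmeas_def by (rule admissible_effect11_sum_proj, rule pure11_Vvec[OF assms])
  show "(\<Sum>a\<in>UNIV. Pmeas v a x y) = id11 x y" for x y
  proof (cases x, cases y)
    fix b1 a2 b1' a2'
    assume "x = (b1, a2)" "y = (b1', a2')"
    then show ?thesis
      using onb2_columns[OF assms, of b1 b1'] by (auto simp: sum_UNIV_bool Pmeas_apply id11_def)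
  qed
qed

lemma valid_meas11_Qmeas:
  assumes "onb2 w"
  shows "valid_meas11 (Qmeas w)"
  unfolding valid_meas11_def
proof (intro conjI allI)
  show "admissible_effect11 (Qmeas w b)" for b
    unfolding Qmeas_def by (rule admissible_effect11_sum_proj, rule pure11_Wvec[OF assms])
  show "(\<Sum>b\<in>UNIV. Qmeas w b x y) = id11 x y" for x y
  proof (cases x, cases y)
    fix b2 a1 b2' a1'
    assume "x = (b2, a1)" "y = (b2', a1')"
    then show ?thesis
      using onb2_columns[OF assms, of a1 a1'] by (auto simp: sum_UNIV_bool Qmeas_apply id11_def)
  qed
qed

definition rot_basis :: "real \<Rightarrow> bool \<Rightarrow> bool \<Rightarrow> complex" where
  "rot_basis \<theta> a i = complex_of_real (if a = i then cos \<theta> else if a then - sin \<theta> else sin \<theta>)"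

lemma onb2_rot_basis: "onb2 (rot_basis \<theta>)"
  unfolding rot_basis_def
  by (rule onb2_of_real) (auto simp: sum_UNIV_bool sin_cos_squared_add3 add.commute)

lemma Re_prob4_rot_basis:
  "Re (prob4 (Pmeas (rot_basis s) a) (Qmeas (rot_basis t) b)) =
     (1/2) * (if a = b then cos (s - t) else sin (s - t))\<^sup>2"
proof -
  have "rot_basis s a False * rot_basis t b False + rot_basis s a True * rot_basis t b True =
      complex_of_real (if a = b then cos (s - t) else if a then - sin (s - t) else sin (s - t))"
    by (cases a; cases b) (simp_all add: rot_basis_def cos_diff sin_diff flip: of_real_mult of_real_add)
  then show ?thesis
    by (simp add: prob4_Pmeas_Qmeas)
qed

lemma corr_rot_basis:
  "corr (\<lambda>x. Pmeas (rot_basis (\<alpha> x))) (\<lambda>y. Qmeas (rot_basis (\<beta> y))) x y =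
     cos (2 * (\<alpha> x - \<beta> y))"
  using cos_double[of "\<alpha> x - \<beta> y"]
  by (simp add: corr_def sum_UNIV_bool pm1_def Re_prob4_rot_basis)

lemma chsh_rot_basis:
  "chsh (\<lambda>x. Pmeas (rot_basis (\<alpha> x))) (\<lambda>y. Qmeas (rot_basis (\<beta> y))) =
     cos (2 * (\<alpha> False - \<beta> False)) + cos (2 * (\<alpha> False - \<beta> True))
     + cos (2 * (\<alpha> True - \<beta> False)) - cos (2 * (\<alpha> True - \<beta> True))"
  by (simp add: chsh_def corr_rot_basis)

lemma chsh_tsirelson:
  "chsh (\<lambda>x. Pmeas (rot_basis (if x then pi/4 else 0)))
        (\<lambda>y. Qmeas (rot_basis (if y then - (pi/8) else pi/8))) = 2 * sqrt 2"
proof -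
  have "cos (3 * pi / 4) = - cos (pi / 4)"
    using cos_pi_minus[of "pi / 4"] by (simp add: field_simps)
  then show ?thesis
    by (simp add: chsh_rot_basis field_simps cos_45)
qed

theorem mainTheorem3:
  shows "(\<forall>v w. onb2 v \<and> onb2 w \<longrightarrow>
            valid_meas11 (Pmeas v) \<and> valid_meas11 (Qmeas w) \<and>
            (\<forall>a b. prob4 (Pmeas v a) (Qmeas w b) =
               complex_of_real ((1/2) * (cmod (v a False * w b False + v a True * w b True))\<^sup>2)))
         \<and> (\<exists>vs ws. (\<forall>x. onb2 (vs x)) \<and> (\<forall>y. onb2 (ws y)) \<and>
              (\<forall>x. valid_meas11 (Pmeas (vs x))) \<and> (\<forall>y. valid_meas11 (Qmeas (ws y))) \<and>
              chsh (\<lambda>x. Pmeas (vs x)) (\<lambda>y. Qmeas (ws y)) = 2 * sqrt 2 \<and>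
              chsh (\<lambda>x. Pmeas (vs x)) (\<lambda>y. Qmeas (ws y)) > 2)"
proof (intro conjI allI impI)
  show "valid_meas11 (Pmeas v)" "valid_meas11 (Qmeas w)" if "onb2 v \<and> onb2 w" for v w
    using that valid_meas11_Pmeas valid_meas11_Qmeas by blast+
  show "prob4 (Pmeas v a) (Qmeas w b) =
      complex_of_real ((1/2) * (cmod (v a False * w b False + v a True * w b True))\<^sup>2)" for v w a b
    by (rule prob4_Pmeas_Qmeas)
next
  let ?vs = "\<lambda>x. rot_basis (if x then pi/4 else 0)"
  let ?ws = "\<lambda>y. rot_basis (if y then - (pi/8) else pi/8)"
  have "2 < 2 * sqrt (2::real)"
    by simp
  then show "\<exists>vs ws. (\<forall>x. onb2 (vs x)) \<and> (\<forall>y. onb2 (ws y)) \<and>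
      (\<forall>x. valid_meas11 (Pmeas (vs x))) \<and> (\<forall>y. valid_meas11 (Qmeas (ws y))) \<and>
      chsh (\<lambda>x. Pmeas (vs x)) (\<lambda>y. Qmeas (ws y)) = 2 * sqrt 2 \<and>
      chsh (\<lambda>x. Pmeas (vs x)) (\<lambda>y. Qmeas (ws y)) > 2"
    by (intro exI[of _ ?vs] exI[of _ ?ws])
      (simp add: onb2_rot_basis valid_meas11_Pmeas valid_meas11_Qmeas chsh_tsirelson)
qed

end
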